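(* Let $X$ be a countable infinite set, $\mathcal{I}$ a $q^+$ and hereditarily meager ideal on $X$, and $\tau$ an $\mathcal{I}$-crowded topology on $X$ with $w(\tau)<\mathfrak{m}_c$. If $\langle F_i:i\in\omega\rangle$ is a sequence of pairwise disjoint finite subsets of $X$ such that $\bigcup_{i\in\omega}F_i$ is $(\mathcal{I},\tau)$-crowded, then there is an $(\mathcal{I},\tau)$-crowded $S\subseteq\bigcup_{i\in\omega}F_i$ such that $|S\cap F_i|\le 1$ for each $i$ and $cl_\tau(S)=cl_\tau(\bigcup_{i\in\omega}F_i)$.
   Context: An ideal on $X$ is a family of subsets of $X$ closed under subsets and finite unions; all ideals are assumed proper ($X\notin\mathcal{I}$) and free (every finite subset of $X$ is in $\mathcal{I}$). $\mathcal{I}^+=\mathcal{P}(X)\setminus\mathcal{I}$. Subsets of $X$ are identified with points of $2^X$. $\mathcal{I}$ is hereditarily meager if for every $A\in\mathcal{I}^+$, $\mathcal{I}\cap\mathcal{P}(A)$ is meager in $2^A$. $\mathcal{I}$ is $q^+$ if for every $A\in\mathcal{I}^+$ and every partition $(F_n)_n$ of $A$ into finite sets there is $S\subseteq A$ with $S\in\mathcal{I}^+$ and $|S\cap F_n|\le1$ for all $n$. A topology $\tau$ on $X$ is $\mathcal{I}$-crowded if $\tau\cap\mathcal{I}=\{\emptyset\}$. A set $A\subseteq X$ is $(\mathcal{I},\tau)$-crowded if for every $U\in\tau$, $A\cap U$ is either empty or in $\mathcal{I}^+$. $\mathfrak{m}_c$ is the least cardinal $\kappa$ such that MA$(\kappa)$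 for countable posets fails. $w$ denotes weight. *)

theory Defs
  imports "HOL-Analysis.Analysis" "HOL-Library.Equipollence"
begin

definition ideal_on :: "'a set \<Rightarrow> 'a set set \<Rightarrow> bool" where
  "ideal_on X I \<longleftrightarrow>
     I \<subseteq> Pow X \<and>
     (\<forall>A B. A \<in> I \<and> B \<subseteq> A \<longrightarrow> B \<in> I) \<and>
     (\<forall>A B. A \<in> I \<and> B \<in> I \<longrightarrow> A \<union> B \<in> I) \<and>
     X \<notin> I \<and>
     (\<forall>F. F \<subseteq> X \<and> finite F \<longrightarrow> F \<in> I)"

definition Iplus :: "'a set \<Rightarrow> 'a set set \<Rightarrow> 'a set set" where
  "Iplus X I = Pow X - I"

definition cantor_space :: "'a set \<Rightarrow> ('a \<Rightarrow> bool) topology" where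
  "cantor_space A = product_topology (\<lambda>_. discrete_topology (UNIV :: bool set)) A"

definition char_pt :: "'a set \<Rightarrow> 'a set \<Rightarrow> ('a \<Rightarrow> bool)" where
  "char_pt A S = restrict (\<lambda>x. x \<in> S) A"

definition nowhere_dense_in :: "'b topology \<Rightarrow> 'b set \<Rightarrow> bool" where
  "nowhere_dense_in T N \<longleftrightarrow> N \<subseteq> topspace T \<and> T interior_of (T closure_of N) = {}"

definition meager_in :: "'b topology \<Rightarrow> 'b set \<Rightarrow> bool" where
  "meager_in T M \<longleftrightarrow> M \<subseteq> topspace T \<and>
     (\<exists>\<N>. countable \<N> \<and> (\<forall>N\<in>\<N>. nowhere_dense_in T N) \<and> M \<subseteq> \<Union>\<N>)"

definition hereditarily_meager :: "'a set \<Rightarrow> 'a set set \<Rightarrow> bool" where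
  "hereditarily_meager X I \<longleftrightarrow>
     (\<forall>A \<in> Iplus X I. meager_in (cantor_space A) (char_pt A ` {S \<in> I. S \<subseteq> A}))"

definition q_plus :: "'a set \<Rightarrow> 'a set set \<Rightarrow> bool" where
  "q_plus X I \<longleftrightarrow>
     (\<forall>A \<in> Iplus X I. \<forall>F :: nat \<Rightarrow> 'a set.
        ((\<forall>n. finite (F n) \<and> F n \<noteq> {}) \<and> (\<forall>m n. m \<noteq> n \<longrightarrow> F m \<inter> F n = {}) \<and>
         (\<Union>n. F n) = A)
        \<longrightarrow> (\<exists>S \<subseteq> A. S \<in> Iplus X I \<and> (\<forall>n. card (S \<inter> F n) \<le> 1)))"

definition I_crowded_topology :: "'a set set \<Rightarrow> 'a topology \<Rightarrow> bool" where
  "I_crowded_topology I \<tau> \<longleftrightarrow> {U. openin \<tau> U} \<inter> I = {{}}"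

definition I_tau_crowded :: "'a set \<Rightarrow> 'a set set \<Rightarrow> 'a topology \<Rightarrow> 'a set \<Rightarrow> bool" where
  "I_tau_crowded X I \<tau> A \<longleftrightarrow> (\<forall>U. openin \<tau> U \<longrightarrow> A \<inter> U = {} \<or> A \<inter> U \<in> Iplus X I)"

definition base_of :: "'a topology \<Rightarrow> 'a set set \<Rightarrow> bool" where
  "base_of \<tau> \<B> \<longleftrightarrow> (\<forall>B\<in>\<B>. openin \<tau> B) \<and>
     (\<forall>U. openin \<tau> U \<longrightarrow> (\<exists>\<C> \<subseteq> \<B>. \<Union>\<C> = U))"

text \<open>Countable posets: carrier P (a subset of nat; every countable poset is isomorphic to one
  of this form) with a partial order le on P.\<close>
definition countable_poset :: "nat set \<Rightarrow> (nat \<Rightarrow> nat \<Rightarrow> bool) \<Rightarrow> bool" where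
  "countable_poset P le \<longleftrightarrow> P \<noteq> {} \<and>
     (\<forall>p\<in>P. le p p) \<and>
     (\<forall>p\<in>P. \<forall>q\<in>P. le p q \<and> le q p \<longrightarrow> p = q) \<and>
     (\<forall>p\<in>P. \<forall>q\<in>P. \<forall>r\<in>P. le p q \<and> le q r \<longrightarrow> le p r)"

definition dense_in_poset :: "nat set \<Rightarrow> (nat \<Rightarrow> nat \<Rightarrow> bool) \<Rightarrow> nat set \<Rightarrow> bool" where
  "dense_in_poset P le D \<longleftrightarrow> D \<subseteq> P \<and> (\<forall>p\<in>P. \<exists>q\<in>D. le q p)"

definition filter_in_poset :: "nat set \<Rightarrow> (nat \<Rightarrow> nat \<Rightarrow> bool) \<Rightarrow> nat set \<Rightarrow> bool" where
  "filter_in_poset P le G \<longleftrightarrow> G \<subseteq> P \<and> G \<noteq> {} \<and>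
     (\<forall>p\<in>G. \<forall>q\<in>P. le p q \<longrightarrow> q \<in> G) \<and>
     (\<forall>p\<in>G. \<forall>q\<in>G. \<exists>r\<in>G. le r p \<and> le r q)"

text \<open>MA(kappa) for countable posets, where kappa = |K|.\<close>
definition MA_countable :: "'k set \<Rightarrow> bool" where
  "MA_countable K \<longleftrightarrow>
     (\<forall>P le (D :: 'k \<Rightarrow> nat set). countable_poset P le \<and> (\<forall>k\<in>K. dense_in_poset P le (D k))
        \<longrightarrow> (\<exists>G. filter_in_poset P le G \<and> (\<forall>k\<in>K. G \<inter> D k \<noteq> {})))"

text \<open>m_c is the least cardinal at which MA for countable posets fails. Hence
  w(tau) < m_c means: MA(kappa) for countable posets holds for every kappa <= w(tau),
  where w(tau) is the minimal cardinality of a base of tau.\<close>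
definition weight_below_mc :: "'a topology \<Rightarrow> bool" where
  "weight_below_mc \<tau> \<longleftrightarrow>
     (\<exists>\<B>. base_of \<tau> \<B> \<and> (\<forall>\<B>'. base_of \<tau> \<B>' \<longrightarrow> \<B> \<lesssim> \<B>') \<and>
          (\<forall>K :: 'a set set. K \<lesssim> \<B> \<longrightarrow> MA_countable K))"

end

theory Submission
  imports Defs
begin

text \<open>
  Let A be the union of the F i. For every basic open set U meeting A, the q+ property yields an
  I-positive selector Y U \<subseteq> A \<inter> U, and hereditary meagerness covers the small subsets of Y U
  by countably many nowhere dense sets N U k of 2^(Y U). Force with finite partial selectors of A
  decided along F 0, F 1, \<dots>: for each pair (U, k) it is dense to decide so much of Y U that the
  trace of the generic selector on Y U escapes N U k. The poset is countable and there are at most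
  w(\<tau>) \<cdot> \<omega> dense sets, so Rasiowa-Sikorski (finite weight) or MA(w(\<tau>)) provides a generic.
  The generic selector S meets every Y U in an I-positive set, hence every nonempty basic trace
  S \<inter> U is I-positive: S is (I, \<tau>)-crowded and dense in A.
\<close>

text \<open>A generic need not be a filter here: pairwise compatibility is all that is used.\<close>

definition pairwise_compatible :: "'c set \<Rightarrow> ('c \<Rightarrow> 'c \<Rightarrow> bool) \<Rightarrow> 'c set \<Rightarrow> bool" where
  "pairwise_compatible C le G \<longleftrightarrow> G \<subseteq> C \<and> (\<forall>p\<in>G. \<forall>q\<in>G. \<exists>r\<in>C. le r p \<and> le r q)"

lemma rasiowa_sikorski:
  fixes le :: "'c \<Rightarrow> 'c \<Rightarrow> bool" and D :: "'j \<Rightarrow> 'c set"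
  assumes "C \<noteq> {}"
    and refl: "\<forall>p\<in>C. le p p"
    and trans: "\<forall>p\<in>C. \<forall>q\<in>C. \<forall>r\<in>C. le p q \<and> le q r \<longrightarrow> le p r"
    and dense: "\<forall>j\<in>J. \<forall>p\<in>C. \<exists>q\<in>D j \<inter> C. le q p"
    and "countable J"
  shows "\<exists>G. pairwise_compatible C le G \<and> (\<forall>j\<in>J. G \<inter> D j \<noteq> {})"
proof (cases "J = {}")
  case True
  then show ?thesis unfolding pairwise_compatible_def by blast
next
  case False
  define e where "e = from_nat_into J"
  have e: "e n \<in> J" for n
    unfolding e_def using False by (rule from_nat_into)
  have "\<exists>p. \<forall>n. p n \<in> C \<and> p (Suc n) \<in> D (e n) \<and> le (p (Suc n)) (p n)"
  proof (rule dependent_nat_choice[where P = "\<lambda>_ x. x \<in> C"])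
    show "\<exists>x. x \<in> C" using \<open>C \<noteq> {}\<close> by blast
    fix x n assume "x \<in> C"
    then show "\<exists>y. y \<in> C \<and> y \<in> D (e n) \<and> le y x" using dense e by blast
  qed
  then obtain p where p: "\<forall>n. p n \<in> C \<and> p (Suc n) \<in> D (e n) \<and> le (p (Suc n)) (p n)"
    by blast
  have descending: "le (p m) (p n)" if "n \<le> m" for n m
    using that
  proof (induction m rule: dec_induct)
    case base then show ?case using refl p by blast
  next
    case (step m) then show ?case using trans p by blast
  qed
  have "pairwise_compatible C le (range p)"
    unfolding pairwise_compatible_def
  proof (intro conjI ballI)
    fix a b assume "a \<in> range p" "b \<in> range p"
    then obtain n m where "a = p n" "b = p m" by blast
    then show "\<exists>r\<in>C. le r a \<and> le r b"
      using p descending[of n "max n m"] descending[of m "max n m"] by auto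
  qed (use p in blast)
  moreover have "range p \<inter> D j \<noteq> {}" if "j \<in> J" for j
    using from_nat_into_surj[OF \<open>countable J\<close> that] p unfolding e_def by (metis disjoint_iff rangeI)
  ultimately show ?thesis by blast
qed

lemma countable_poset_inj_image:
  assumes "inj_on e C" "C \<noteq> {}"
    and "\<forall>p\<in>C. le p p"
    and "\<forall>p\<in>C. \<forall>q\<in>C. le p q \<and> le q p \<longrightarrow> p = q"
    and "\<forall>p\<in>C. \<forall>q\<in>C. \<forall>r\<in>C. le p q \<and> le q r \<longrightarrow> le p r"
  shows "countable_poset (e ` C) (\<lambda>a b. le (inv_into C e a) (inv_into C e b))"
proof -
  have iv: "inv_into C e (e x) = x" if "x \<in> C" for x
    using assms(1) that by simp
  show ?thesis
    unfolding countable_poset_def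
  proof (intro conjI ballI impI)
    show "e ` C \<noteq> {}" using assms(2) by blast
  next
    fix a assume "a \<in> e ` C"
    then show "le (inv_into C e a) (inv_into C e a)" using assms(3) iv by auto
  next
    fix a b assume "a \<in> e ` C" "b \<in> e ` C"
      "le (inv_into C e a) (inv_into C e b) \<and> le (inv_into C e b) (inv_into C e a)"
    then obtain x y where xy: "x \<in> C" "y \<in> C" "a = e x" "b = e y" "le x y" "le y x"
      using iv by auto
    then have "x = y" using assms(4) by blast
    then show "a = b" using xy by simp
  next
    fix a b c assume "a \<in> e ` C" "b \<in> e ` C" "c \<in> e ` C"
      "le (inv_into C e a) (inv_into C e b) \<and> le (inv_into C e b) (inv_into C e c)"
    then obtain x y z where xyz: "x \<in> C" "y \<in> C" "z \<in> C" "a = e x" "c = e z"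
        "le x y" "le y z"
      using iv by auto
    then have "le x z" using assms(5) by blast
    then show "le (inv_into C e a) (inv_into C e c)" using xyz iv by simp
  qed
qed

lemma dense_in_poset_inj_image:
  assumes "inj_on e C" and dense: "\<forall>p\<in>C. \<exists>q\<in>D \<inter> C. le q p"
  shows "dense_in_poset (e ` C) (\<lambda>a b. le (inv_into C e a) (inv_into C e b)) (e ` (D \<inter> C))"
  unfolding dense_in_poset_def
proof (intro conjI ballI)
  show "e ` (D \<inter> C) \<subseteq> e ` C" by blast
  fix a assume "a \<in> e ` C"
  then obtain x where x: "x \<in> C" "a = e x" by blast
  then obtain q where q: "q \<in> D \<inter> C" "le q x" using dense by blast
  then have "le (inv_into C e (e q)) (inv_into C e a)" using x \<open>inj_on e C\<close> by simp
  then show "\<exists>b\<in>e ` (D \<inter> C). le (inv_into C e b) (inv_into C e a)" using q(1) by blast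
qed

lemma MA_countable_generic:
  fixes le :: "'c \<Rightarrow> 'c \<Rightarrow> bool" and D :: "'j \<Rightarrow> 'c set" and K :: "'k set"
  assumes MA: "MA_countable K" and "J \<lesssim> K"
    and "C \<noteq> {}" and "countable C"
    and refl: "\<forall>p\<in>C. le p p"
    and antisym: "\<forall>p\<in>C. \<forall>q\<in>C. le p q \<and> le q p \<longrightarrow> p = q"
    and trans: "\<forall>p\<in>C. \<forall>q\<in>C. \<forall>r\<in>C. le p q \<and> le q r \<longrightarrow> le p r"
    and dense: "\<forall>j\<in>J. \<forall>p\<in>C. \<exists>q\<in>D j \<inter> C. le q p"
  shows "\<exists>G. pairwise_compatible C le G \<and> (\<forall>j\<in>J. G \<inter> D j \<noteq> {})"
proof -
  obtain h where h: "J \<subseteq> h ` K" using \<open>J \<lesssim> K\<close> by (auto simp: lepoll_iff)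
  obtain e :: "'c \<Rightarrow> nat" where e: "inj_on e C" using \<open>countable C\<close> by (auto simp: countable_def)
  define iv where "iv = inv_into C e"
  have iv: "iv (e x) = x" if "x \<in> C" for x using e that by (simp add: iv_def)
  define le' where "le' = (\<lambda>a b. le (iv a) (iv b))"
  define D' where "D' k = (if h k \<in> J then D (h k) else C)" for k
  have "countable_poset (e ` C) le'"
    unfolding le'_def iv_def using countable_poset_inj_image[OF e \<open>C \<noteq> {}\<close> refl antisym trans] .
  moreover have "dense_in_poset (e ` C) le' (e ` (D' k \<inter> C))" for k
    unfolding le'_def iv_def using dense refl
    by (intro dense_in_poset_inj_image[OF e]) (auto simp: D'_def)
  ultimately obtain G' where G': "filter_in_poset (e ` C) le' G'" "\<forall>k\<in>K. G' \<inter> e ` (D' k \<inter> C) \<noteq> {}"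
    using MA[unfolded MA_countable_def, rule_format, of "e ` C" le' "\<lambda>k. e ` (D' k \<inter> C)"] by blast
  have G'C: "G' \<subseteq> e ` C" using G'(1) unfolding filter_in_poset_def by blast
  have "pairwise_compatible C le (iv ` G')"
    unfolding pairwise_compatible_def
  proof (intro conjI ballI)
    show "iv ` G' \<subseteq> C" using G'C iv by auto
    fix a b assume "a \<in> iv ` G'" "b \<in> iv ` G'"
    then obtain a' b' where "a' \<in> G'" "b' \<in> G'" "a = iv a'" "b = iv b'" by blast
    moreover obtain r where r: "r \<in> G'" "le' r a'" "le' r b'"
      using G'(1) calculation(1,2) unfolding filter_in_poset_def by blast
    moreover have "iv r \<in> C" using r(1) G'C iv by auto
    ultimately show "\<exists>r\<in>C. le r a \<and> le r b" unfolding le'_def by blast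
  qed
  moreover have "iv ` G' \<inter> D j \<noteq> {}" if j: "j \<in> J" for j
  proof -
    obtain k where k: "k \<in> K" "h k = j" using h j by blast
    then have "G' \<inter> e ` (D' k \<inter> C) \<noteq> {}" using G'(2) by blast
    then have "G' \<inter> e ` (D j \<inter> C) \<noteq> {}" using k(2) j unfolding D'_def by simp
    then obtain x where "x \<in> D j \<inter> C" "e x \<in> G'" by blast
    then show ?thesis using iv by (metis IntD1 IntD2 disjoint_iff imageI)
  qed
  ultimately show ?thesis by blast
qed

lemma infinite_times_nat_lepoll:
  assumes "infinite B"
  shows "B \<times> (UNIV :: nat set) \<lesssim> B"
proof -
  have "B \<times> (UNIV :: nat set) \<lesssim> B \<times> B"
    using assms by (simp add: times_lepoll_mono infinite_le_lepoll)
  moreover have "B \<times> B \<approx> B"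
    using card_of_Times_same_infinite[OF assms] by (simp add: eqpoll_iff_card_of_ordIso)
  ultimately show ?thesis
    using eqpoll_imp_lepoll lepoll_trans by blast
qed

lemma MA_countable_generic_times_nat:
  fixes le :: "'c \<Rightarrow> 'c \<Rightarrow> bool" and D :: "'j \<Rightarrow> 'c set" and B :: "'b set"
  assumes MA: "MA_countable B" and J: "J \<lesssim> B \<times> (UNIV :: nat set)"
    and "C \<noteq> {}" and "countable C"
    and refl: "\<forall>p\<in>C. le p p"
    and antisym: "\<forall>p\<in>C. \<forall>q\<in>C. le p q \<and> le q p \<longrightarrow> p = q"
    and trans: "\<forall>p\<in>C. \<forall>q\<in>C. \<forall>r\<in>C. le p q \<and> le q r \<longrightarrow> le p r"
    and dense: "\<forall>j\<in>J. \<forall>p\<in>C. \<exists>q\<in>D j \<inter> C. le q p"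
  shows "\<exists>G. pairwise_compatible C le G \<and> (\<forall>j\<in>J. G \<inter> D j \<noteq> {})"
proof (cases "finite B")
  case True
  then have "countable (B \<times> (UNIV :: nat set))" by (simp add: countable_finite)
  then have "countable J" using J by (rule countable_lepoll)
  then show ?thesis by (rule rasiowa_sikorski[OF \<open>C \<noteq> {}\<close> refl trans dense])
next
  case False
  then have "J \<lesssim> B" using J infinite_times_nat_lepoll lepoll_trans by metis
  then show ?thesis
    by (rule MA_countable_generic[OF MA _ \<open>C \<noteq> {}\<close> \<open>countable C\<close> refl antisym trans dense])
qed

lemma Iplus_infinite: "ideal_on X I \<Longrightarrow> Y \<in> Iplus X I \<Longrightarrow> infinite Y"
  unfolding ideal_on_def Iplus_def by auto

lemma Iplus_mono: "ideal_on X I \<Longrightarrow> Y \<in> Iplus X I \<Longrightarrow> Y \<subseteq> Z \<Longrightarrow> Z \<subseteq> X \<Longrightarrow> Z \<in> Iplus X I"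
  unfolding ideal_on_def Iplus_def by blast

lemma q_plus_selector:
  fixes F :: "nat \<Rightarrow> 'a set"
  assumes "ideal_on X I" and q: "q_plus X I" and Y: "Y \<in> Iplus X I"
    and fin: "\<forall>i. finite (F i)" and disj: "\<forall>i j. i \<noteq> j \<longrightarrow> F i \<inter> F j = {}"
    and "Y \<subseteq> (\<Union>i. F i)"
  shows "\<exists>Z\<subseteq>Y. Z \<in> Iplus X I \<and> (\<forall>i. card (Z \<inter> F i) \<le> 1)"
proof -
  define M where "M = {i. F i \<inter> Y \<noteq> {}}"
  have "Y \<subseteq> (\<Union>i\<in>M. F i)" using \<open>Y \<subseteq> (\<Union>i. F i)\<close> unfolding M_def by blast
  then have "infinite M"
    using Iplus_infinite[OF \<open>ideal_on X I\<close> Y] fin by (meson finite_UN_I finite_subset)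
  then have en: "bij_betw (enumerate M) UNIV M" by (rule bij_enumerate)
  define G where "G n = F (enumerate M n) \<inter> Y" for n
  have G_disj: "G m \<inter> G n = {}" if "m \<noteq> n" for m n
  proof -
    have "enumerate M m \<noteq> enumerate M n" using that en by (simp add: bij_betw_def inj_eq)
    then show ?thesis using disj unfolding G_def by blast
  qed
  have G_union: "(\<Union>n. G n) = Y"
  proof
    show "(\<Union>n. G n) \<subseteq> Y" unfolding G_def by blast
    show "Y \<subseteq> (\<Union>n. G n)"
    proof
      fix y assume "y \<in> Y"
      then obtain i where "i \<in> M" "y \<in> F i" using \<open>Y \<subseteq> (\<Union>i\<in>M. F i)\<close> by blast
      moreover obtain n where "enumerate M n = i" using en \<open>i \<in> M\<close> unfolding bij_betw_def by (metis rangeE)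
      ultimately show "y \<in> (\<Union>n. G n)" using \<open>y \<in> Y\<close> unfolding G_def by blast
    qed
  qed
  have "finite (G n) \<and> G n \<noteq> {}" for n
    using fin en unfolding G_def M_def bij_betw_def by auto
  then have "\<exists>Z\<subseteq>Y. Z \<in> Iplus X I \<and> (\<forall>n. card (Z \<inter> G n) \<le> 1)"
    using G_disj G_union by (intro q[unfolded q_plus_def, rule_format, OF Y]) blast
  then obtain Z where Z: "Z \<subseteq> Y" "Z \<in> Iplus X I" "\<forall>n. card (Z \<inter> G n) \<le> 1"
    by blast
  have "card (Z \<inter> F i) \<le> 1" for i
  proof (cases "i \<in> M")
    case True
    then obtain n where "enumerate M n = i" using en unfolding bij_betw_def by (metis rangeE)
    then have "Z \<inter> F i = Z \<inter> G n" using Z(1) unfolding G_def by blast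
    then show ?thesis using Z(3) by simp
  next
    case False
    then have "Z \<inter> F i = {}" using Z(1) unfolding M_def by blast
    then show ?thesis by simp
  qed
  then show ?thesis using Z(1,2) by blast
qed

lemma cantor_space_cylinder_openin:
  assumes "finite W"
  shows "openin (cantor_space Y) (PiE Y (\<lambda>y. if y \<in> W then {v y} else UNIV))"
proof -
  have "{y \<in> Y. (if y \<in> W then {v y} else UNIV) \<noteq> topspace (discrete_topology (UNIV :: bool set))} \<subseteq> W"
    by auto
  then show ?thesis
    unfolding cantor_space_def openin_PiE_gen using assms finite_subset by auto
qed

lemma cantor_space_openin_cylinder:
  assumes "openin (cantor_space Y) V" "f \<in> V"
  shows "\<exists>W. finite W \<and> W \<subseteq> Y \<and> (\<forall>Z. (\<forall>y\<in>W. (y \<in> Z) = f y) \<longrightarrow> char_pt Y Z \<in> V)"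
proof -
  obtain U where "finite {y \<in> Y. U y \<noteq> topspace (discrete_topology (UNIV :: bool set))}"
    "f \<in> PiE Y U" "PiE Y U \<subseteq> V"
    using assms unfolding cantor_space_def openin_product_topology_alt by blast
  then have U: "finite {y \<in> Y. U y \<noteq> UNIV}" "f \<in> PiE Y U" "PiE Y U \<subseteq> V" by simp_all
  define W where "W = {y \<in> Y. U y \<noteq> UNIV}"
  have "char_pt Y Z \<in> V" if Z: "\<forall>y\<in>W. (y \<in> Z) = f y" for Z
  proof -
    have "char_pt Y Z \<in> PiE Y U"
    proof (rule PiE_I)
      fix y assume "y \<in> Y"
      then show "char_pt Y Z y \<in> U y"
        using Z U(2) unfolding char_pt_def W_def by (cases "U y = UNIV") (auto simp: PiE_iff)
    qed (simp add: char_pt_def)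
    then show ?thesis using U(3) by blast
  qed
  moreover have "finite W" "W \<subseteq> Y" using U(1) unfolding W_def by auto
  ultimately show ?thesis by blast
qed

lemma nowhere_dense_finite_escape:
  assumes nd: "nowhere_dense_in (cantor_space Y) N" and "finite W" "W \<subseteq> Y"
  shows "\<exists>W' f. finite W' \<and> W \<subseteq> W' \<and> W' \<subseteq> Y \<and> (\<forall>y\<in>W. f y = (y \<in> s)) \<and>
     (\<forall>Z. (\<forall>y\<in>W'. (y \<in> Z) = f y) \<longrightarrow> char_pt Y Z \<notin> N)"
proof -
  let ?T = "cantor_space Y"
  define V where "V = PiE Y (\<lambda>y. if y \<in> W then {y \<in> s} else UNIV)"
  have V: "openin ?T V" unfolding V_def by (rule cantor_space_cylinder_openin[OF \<open>finite W\<close>])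
  have "char_pt Y s \<in> V" unfolding V_def char_pt_def by auto
  have "\<not> V \<subseteq> ?T closure_of N"
  proof
    assume "V \<subseteq> ?T closure_of N"
    then have "V \<subseteq> ?T interior_of (?T closure_of N)" using V by (rule interior_of_maximal)
    then show False using nd \<open>char_pt Y s \<in> V\<close> unfolding nowhere_dense_in_def by blast
  qed
  then obtain f where f: "f \<in> V" "f \<notin> ?T closure_of N" by blast
  have "openin ?T (topspace ?T - ?T closure_of N)" by (simp add: openin_diff closedin_closure_of)
  moreover have "f \<in> topspace ?T - ?T closure_of N"
    using f V openin_subset by blast
  ultimately have "\<exists>W''. finite W'' \<and> W'' \<subseteq> Y \<and>
      (\<forall>Z. (\<forall>y\<in>W''. (y \<in> Z) = f y) \<longrightarrow> char_pt Y Z \<in> topspace ?T - ?T closure_of N)"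
    by (rule cantor_space_openin_cylinder)
  then obtain W'' where W'': "finite W''" "W'' \<subseteq> Y"
    "\<forall>Z. (\<forall>y\<in>W''. (y \<in> Z) = f y) \<longrightarrow> char_pt Y Z \<in> topspace ?T - ?T closure_of N"
    by blast
  have "char_pt Y Z \<notin> N" if "\<forall>y\<in>W \<union> W''. (y \<in> Z) = f y" for Z
  proof -
    have "char_pt Y Z \<notin> ?T closure_of N" using W''(3) that by blast
    moreover have "N \<subseteq> topspace ?T" using nd unfolding nowhere_dense_in_def by blast
    ultimately show ?thesis using closure_of_subset by blast
  qed
  moreover have "\<forall>y\<in>W. f y = (y \<in> s)"
  proof
    fix y assume "y \<in> W"
    then have "f y \<in> (if y \<in> W then {y \<in> s} else UNIV)"
      using f(1) \<open>W \<subseteq> Y\<close> unfolding V_def by blast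
    then show "f y = (y \<in> s)" using \<open>y \<in> W\<close> by simp
  qed
  moreover have "finite (W \<union> W'')" "W \<subseteq> W \<union> W''" "W \<union> W'' \<subseteq> Y"
    using W''(1,2) \<open>finite W\<close> \<open>W \<subseteq> Y\<close> by auto
  ultimately show ?thesis by (intro exI[of _ "W \<union> W''"] exI[of _ f] conjI) simp_all
qed

definition initial_union :: "(nat \<Rightarrow> 'a set) \<Rightarrow> nat \<Rightarrow> 'a set" where
  "initial_union F n = (\<Union>i<n. F i)"

lemma initial_union_mono: "m \<le> n \<Longrightarrow> initial_union F m \<subseteq> initial_union F n"
  unfolding initial_union_def by (intro UN_mono) auto

lemma finite_initial_union: "\<forall>i. finite (F i) \<Longrightarrow> finite (initial_union F n)"
  unfolding initial_union_def by auto

lemma subset_initial_union: "i < n \<Longrightarrow> F i \<subseteq> initial_union F n"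
  unfolding initial_union_def by auto

lemma initial_union_subset_Union: "initial_union F n \<subseteq> (\<Union>i. F i)"
  unfolding initial_union_def by auto

lemma disjoint_initial_union:
  assumes "\<forall>i j. i \<noteq> j \<longrightarrow> F i \<inter> F j = {}" "n \<le> i"
  shows "F i \<inter> initial_union F n = {}"
proof -
  have "F i \<inter> F j = {}" if "j < n" for j
    using assms that by (metis leD)
  then show ?thesis unfolding initial_union_def by blast
qed

lemma finite_subset_initial_union:
  assumes "finite W" "W \<subseteq> (\<Union>i. F i)"
  shows "\<exists>n. W \<subseteq> initial_union F n"
  using assms
proof (induction W rule: finite_induct)
  case empty
  then show ?case by blast
next
  case (insert x W)
  then obtain n i where "W \<subseteq> initial_union F n" "x \<in> F i" by blast
  then have "insert x W \<subseteq> initial_union F (max n (Suc i))"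
    using initial_union_mono[of n "max n (Suc i)" F] subset_initial_union[of i "max n (Suc i)" F]
    by (simp add: subset_iff)
  then show ?case by blast
qed

text \<open>The forcing conditions: (s, n) decides the generic selector on the first n pieces.\<close>

definition partial_selectors :: "(nat \<Rightarrow> 'a set) \<Rightarrow> ('a set \<times> nat) set" where
  "partial_selectors F = {(s, n). s \<subseteq> initial_union F n \<and> (\<forall>i. card (s \<inter> F i) \<le> 1)}"

definition end_extends :: "(nat \<Rightarrow> 'a set) \<Rightarrow> 'a set \<times> nat \<Rightarrow> 'a set \<times> nat \<Rightarrow> bool" where
  "end_extends F p q \<longleftrightarrow> snd q \<le> snd p \<and> fst q = fst p \<inter> initial_union F (snd q)"

lemma mem_partial_selectors_iff:
  "p \<in> partial_selectors F \<longleftrightarrow> fst p \<subseteq> initial_union F (snd p) \<and> (\<forall>i. card (fst p \<inter> F i) \<le> 1)"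
  unfolding partial_selectors_def by (cases p) simp

lemma countable_partial_selectors:
  assumes "\<forall>i. finite (F i)"
  shows "countable (partial_selectors F)"
proof (rule countable_subset)
  show "partial_selectors F \<subseteq> (\<Union>n. Pow (initial_union F n) \<times> {n})"
    unfolding partial_selectors_def by blast
  show "countable (\<Union>n. Pow (initial_union F n) \<times> {n})"
    using finite_initial_union[OF assms] by (intro countable_UN) (auto intro: countable_finite)
qed

lemma end_extends_refl: "p \<in> partial_selectors F \<Longrightarrow> end_extends F p p"
  unfolding partial_selectors_def end_extends_def by auto

lemma end_extends_trans: "end_extends F p q \<Longrightarrow> end_extends F q r \<Longrightarrow> end_extends F p r"
  unfolding end_extends_def using initial_union_mono[of "snd r" "snd q" F] by auto

lemma end_extends_antisym:
  "p \<in> partial_selectors F \<Longrightarrow> end_extends F p q \<Longrightarrow> end_extends F q p \<Longrightarrow> p = q"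
  unfolding partial_selectors_def end_extends_def by (auto simp: prod_eq_iff)

lemma partial_selector_extend:
  assumes "(s, n) \<in> partial_selectors F" and disj: "\<forall>i j. i \<noteq> j \<longrightarrow> F i \<inter> F j = {}"
    and fin: "\<forall>i. finite (F i)" and Y: "\<forall>i. card (Y \<inter> F i) \<le> 1"
    and T: "T \<subseteq> Y - initial_union F n" "T \<subseteq> initial_union F m" and "n \<le> m"
  shows "(s \<union> T, m) \<in> partial_selectors F \<and> end_extends F (s \<union> T, m) (s, n)"
proof -
  have s: "s \<subseteq> initial_union F n" "\<forall>i. card (s \<inter> F i) \<le> 1"
    using assms(1) unfolding partial_selectors_def by auto
  have "card ((s \<union> T) \<inter> F i) \<le> 1" for i
  proof (cases "i < n")
    case True
    then have "F i \<subseteq> initial_union F n" by (rule subset_initial_union)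
    then have "(s \<union> T) \<inter> F i = s \<inter> F i" using T(1) by auto
    then show ?thesis using s(2) by simp
  next
    case False
    then have "s \<inter> F i = {}" using s(1) disjoint_initial_union[OF disj, of n i] by auto
    then have "(s \<union> T) \<inter> F i \<subseteq> Y \<inter> F i" using T(1) by auto
    then have "card ((s \<union> T) \<inter> F i) \<le> card (Y \<inter> F i)"
      using fin by (intro card_mono) auto
    then show ?thesis using Y[rule_format, of i] by linarith
  qed
  moreover have "s \<union> T \<subseteq> initial_union F m" using s(1) T(2) initial_union_mono[OF \<open>n \<le> m\<close>, of F] by blast
  moreover have "(s \<union> T) \<inter> initial_union F n = s" using s(1) T(1) by auto
  ultimately show ?thesis
    using \<open>n \<le> m\<close> unfolding mem_partial_selectors_iff end_extends_def by simp
qed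

definition forces_outside ::
    "(nat \<Rightarrow> 'a set) \<Rightarrow> 'a set \<Rightarrow> ('a \<Rightarrow> bool) set \<Rightarrow> 'a set \<times> nat \<Rightarrow> bool" where
  "forces_outside F Y N p \<longleftrightarrow>
     (\<forall>Z\<subseteq>Y. Z \<inter> initial_union F (snd p) = fst p \<inter> Y \<longrightarrow> char_pt Y Z \<notin> N)"

lemma forces_outside_dense:
  assumes disj: "\<forall>i j. i \<noteq> j \<longrightarrow> F i \<inter> F j = {}" and fin: "\<forall>i. finite (F i)"
    and Y: "Y \<subseteq> (\<Union>i. F i)" "\<forall>i. card (Y \<inter> F i) \<le> 1"
    and nd: "nowhere_dense_in (cantor_space Y) N"
    and p: "(s, n) \<in> partial_selectors F"
  shows "\<exists>q\<in>partial_selectors F. end_extends F q (s, n) \<and> forces_outside F Y N q"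
proof -
  define W where "W = Y \<inter> initial_union F n"
  have "finite W" "W \<subseteq> Y" using finite_initial_union[OF fin] unfolding W_def by auto
  then obtain W' f where W': "finite W'" "W \<subseteq> W'" "W' \<subseteq> Y" "\<forall>y\<in>W. f y = (y \<in> s)"
    "\<forall>Z. (\<forall>y\<in>W'. (y \<in> Z) = f y) \<longrightarrow> char_pt Y Z \<notin> N"
    using nowhere_dense_finite_escape[OF nd, of W s] by blast
  have "W' \<subseteq> (\<Union>i. F i)" using W'(3) Y(1) by (rule subset_trans)
  then obtain m0 where "W' \<subseteq> initial_union F m0"
    using finite_subset_initial_union[OF W'(1)] by blast
  define m where "m = max m0 n"
  then have "n \<le> m" "W' \<subseteq> initial_union F m"
    using \<open>W' \<subseteq> initial_union F m0\<close> initial_union_mono[of m0 m F] by auto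
  define T where "T = {y \<in> W' - W. f y}"
  have "T \<subseteq> Y - initial_union F n" "T \<subseteq> initial_union F m"
    using W'(3) \<open>W' \<subseteq> initial_union F m\<close> unfolding T_def W_def by auto
  then have q: "(s \<union> T, m) \<in> partial_selectors F" "end_extends F (s \<union> T, m) (s, n)"
    using partial_selector_extend[OF p disj fin Y(2)] \<open>n \<le> m\<close> by simp_all
  have s: "s \<subseteq> initial_union F n" using p unfolding partial_selectors_def by simp
  have "char_pt Y Z \<notin> N"
    if Z: "Z \<subseteq> Y" "Z \<inter> initial_union F m = (s \<union> T) \<inter> Y" for Z
  proof -
    have "(y \<in> Z) = f y" if "y \<in> W'" for y
    proof -
      have "(y \<in> Z) = (y \<in> s \<union> T)"
        using that W'(3) \<open>W' \<subseteq> initial_union F m\<close> Z(2) by blast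
      also have "\<dots> = f y"
        using that W'(3,4) s unfolding T_def W_def by auto
      finally show ?thesis .
    qed
    then show ?thesis using W'(5) by blast
  qed
  then have "forces_outside F Y N (s \<union> T, m)" unfolding forces_outside_def by simp
  then show ?thesis using q by blast
qed

lemma compatible_selectors_trace:
  assumes G: "pairwise_compatible (partial_selectors F) (end_extends F) G" and "p \<in> G"
  shows "(\<Union>(fst ` G)) \<inter> initial_union F (snd p) = fst p"
proof
  have "p \<in> partial_selectors F" using assms unfolding pairwise_compatible_def by blast
  then show "fst p \<subseteq> (\<Union>(fst ` G)) \<inter> initial_union F (snd p)"
    using \<open>p \<in> G\<close> unfolding mem_partial_selectors_iff by blast
  show "(\<Union>(fst ` G)) \<inter> initial_union F (snd p) \<subseteq> fst p"
  proof
    fix x assume x: "x \<in> (\<Union>(fst ` G)) \<inter> initial_union F (snd p)"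
    then obtain q where "q \<in> G" "x \<in> fst q" by blast
    then obtain r where "end_extends F r p" "end_extends F r q"
      using G \<open>p \<in> G\<close> unfolding pairwise_compatible_def by blast
    then show "x \<in> fst p" using x \<open>x \<in> fst q\<close> unfolding end_extends_def by blast
  qed
qed

lemma compatible_selectors_Union_selector:
  assumes G: "pairwise_compatible (partial_selectors F) (end_extends F) G"
    and "finite (F i)"
  shows "card ((\<Union>(fst ` G)) \<inter> F i) \<le> 1"
proof -
  have "x = y" if xy: "x \<in> (\<Union>(fst ` G)) \<inter> F i" "y \<in> (\<Union>(fst ` G)) \<inter> F i" for x y
  proof -
    obtain p q where "p \<in> G" "q \<in> G" "x \<in> fst p" "y \<in> fst q" using xy by blast
    then obtain r where r: "r \<in> partial_selectors F" "end_extends F r p" "end_extends F r q"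
      using G unfolding pairwise_compatible_def by blast
    then have "x \<in> fst r \<inter> F i" "y \<in> fst r \<inter> F i"
      using xy \<open>x \<in> fst p\<close> \<open>y \<in> fst q\<close> unfolding end_extends_def by auto
    moreover have "card (fst r \<inter> F i) \<le> Suc 0" using r(1) unfolding mem_partial_selectors_iff by auto
    ultimately show ?thesis using \<open>finite (F i)\<close> by (auto simp: card_le_Suc0_iff_eq)
  qed
  then show ?thesis using \<open>finite (F i)\<close> by (auto simp: card_le_Suc0_iff_eq)
qed

lemma selector_avoiding_nowhere_dense:
  fixes F :: "nat \<Rightarrow> 'a set" and Y :: "'j \<Rightarrow> 'a set" and N :: "'j \<Rightarrow> nat \<Rightarrow> ('a \<Rightarrow> bool) set"
    and B :: "'b set"
  assumes MA: "MA_countable B" and "J \<lesssim> B"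
    and fin: "\<forall>i. finite (F i)" and disj: "\<forall>i j. i \<noteq> j \<longrightarrow> F i \<inter> F j = {}"
    and Y: "\<forall>j\<in>J. Y j \<subseteq> (\<Union>i. F i) \<and> (\<forall>i. card (Y j \<inter> F i) \<le> 1)"
    and nd: "\<forall>j\<in>J. \<forall>k. nowhere_dense_in (cantor_space (Y j)) (N j k)"
  shows "\<exists>S \<subseteq> (\<Union>i. F i). (\<forall>i. card (S \<inter> F i) \<le> 1) \<and>
           (\<forall>j\<in>J. \<forall>k. char_pt (Y j) (S \<inter> Y j) \<notin> N j k)"
proof -
  let ?C = "partial_selectors F"
  define D where "D = (\<lambda>(j, k). {q. forces_outside F (Y j) (N j k) q})"
  have "J \<times> (UNIV :: nat set) \<lesssim> B \<times> (UNIV :: nat set)"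
    using \<open>J \<lesssim> B\<close> by (simp add: times_lepoll_mono)
  moreover have "({}, 0) \<in> ?C" unfolding partial_selectors_def by simp
  then have "?C \<noteq> {}" by blast
  moreover have "\<forall>p\<in>?C. end_extends F p p" using end_extends_refl by blast
  moreover have "\<forall>p\<in>?C. \<forall>q\<in>?C. end_extends F p q \<and> end_extends F q p \<longrightarrow> p = q"
    using end_extends_antisym by blast
  moreover have "\<forall>p\<in>?C. \<forall>q\<in>?C. \<forall>r\<in>?C. end_extends F p q \<and> end_extends F q r \<longrightarrow> end_extends F p r"
    using end_extends_trans by blast
  moreover have "\<forall>jk\<in>J \<times> UNIV. \<forall>p\<in>?C. \<exists>q\<in>D jk \<inter> ?C. end_extends F q p"
  proof (intro ballI)
    fix jk p assume jk: "jk \<in> J \<times> (UNIV :: nat set)" and "p \<in> ?C"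
    obtain j k where jk: "jk = (j, k)" "j \<in> J" using jk by auto
    obtain s n where p: "p = (s, n)" by (cases p)
    have "Y j \<subseteq> (\<Union>i. F i)" "\<forall>i. card (Y j \<inter> F i) \<le> 1"
      "nowhere_dense_in (cantor_space (Y j)) (N j k)"
      using Y nd \<open>j \<in> J\<close> by auto
    from forces_outside_dense[OF disj fin this \<open>p \<in> ?C\<close>[unfolded p]]
    obtain q where "q \<in> ?C" "end_extends F q p" "forces_outside F (Y j) (N j k) q"
      unfolding p by blast
    then show "\<exists>q\<in>D jk \<inter> ?C. end_extends F q p" unfolding D_def jk by auto
  qed
  ultimately have "\<exists>G. pairwise_compatible ?C (end_extends F) G \<and> (\<forall>jk\<in>J \<times> UNIV. G \<inter> D jk \<noteq> {})"
    by (rule MA_countable_generic_times_nat[OF MA _ _ countable_partial_selectors[OF fin]])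
  then obtain G where G: "pairwise_compatible ?C (end_extends F) G" "\<forall>jk\<in>J \<times> UNIV. G \<inter> D jk \<noteq> {}"
    by blast
  define S where "S = \<Union>(fst ` G)"
  have "S \<subseteq> (\<Union>i. F i)"
  proof
    fix x assume "x \<in> S"
    then obtain p where "p \<in> G" "x \<in> fst p" unfolding S_def by blast
    moreover have "p \<in> partial_selectors F" using G(1) \<open>p \<in> G\<close> unfolding pairwise_compatible_def by blast
    ultimately have "x \<in> initial_union F (snd p)" unfolding mem_partial_selectors_iff by blast
    then show "x \<in> (\<Union>i. F i)" using initial_union_subset_Union[of F] by blast
  qed
  moreover have "card (S \<inter> F i) \<le> 1" for i
    unfolding S_def by (rule compatible_selectors_Union_selector[OF G(1) fin[rule_format]])
  moreover have "char_pt (Y j) (S \<inter> Y j) \<notin> N j k" if "j \<in> J" for j k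
  proof -
    have "G \<inter> D (j, k) \<noteq> {}" using G(2) \<open>j \<in> J\<close> by blast
    then obtain p where "p \<in> G" "forces_outside F (Y j) (N j k) p" unfolding D_def by auto
    moreover have "(S \<inter> Y j) \<inter> initial_union F (snd p) = (S \<inter> initial_union F (snd p)) \<inter> Y j"
      by (simp add: Int_ac)
    then have "(S \<inter> Y j) \<inter> initial_union F (snd p) = fst p \<inter> Y j"
      using compatible_selectors_trace[OF G(1) \<open>p \<in> G\<close>] unfolding S_def by simp
    ultimately show ?thesis unfolding forces_outside_def by (meson Int_lower2)
  qed
  ultimately show ?thesis by blast
qed

lemma hereditarily_meager_cover:
  assumes "ideal_on X I" "hereditarily_meager X I" "Y \<in> Iplus X I"
  shows "\<exists>N. (\<forall>k::nat. nowhere_dense_in (cantor_space Y) (N k)) \<and>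
           (\<forall>Z\<subseteq>Y. (\<forall>k. char_pt Y Z \<notin> N k) \<longrightarrow> Z \<notin> I)"
proof -
  have "meager_in (cantor_space Y) (char_pt Y ` {Z \<in> I. Z \<subseteq> Y})"
    using assms(2,3) unfolding hereditarily_meager_def by blast
  then obtain \<N> where \<N>: "countable \<N>" "\<forall>N\<in>\<N>. nowhere_dense_in (cantor_space Y) N"
    "char_pt Y ` {Z \<in> I. Z \<subseteq> Y} \<subseteq> \<Union>\<N>"
    unfolding meager_in_def by blast
  have "{} \<in> I" using assms(1) unfolding ideal_on_def by blast
  then have "char_pt Y {} \<in> \<Union>\<N>" using \<N>(3) by blast
  then have "\<N> \<noteq> {}" by blast
  have "nowhere_dense_in (cantor_space Y) (from_nat_into \<N> k)" for k
    using \<N>(2) from_nat_into[OF \<open>\<N> \<noteq> {}\<close>, of k] by blast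
  moreover have "Z \<notin> I" if Z: "Z \<subseteq> Y" "\<forall>k. char_pt Y Z \<notin> from_nat_into \<N> k" for Z
  proof
    assume "Z \<in> I"
    then obtain N where "N \<in> \<N>" "char_pt Y Z \<in> N" using \<N>(3) Z(1) by blast
    moreover obtain k where "from_nat_into \<N> k = N" using from_nat_into_surj[OF \<N>(1) \<open>N \<in> \<N>\<close>] by blast
    ultimately show False using Z(2) by blast
  qed
  ultimately show ?thesis by blast
qed

lemma selector_positive_on_family:
  fixes F :: "nat \<Rightarrow> 'a set" and \<U> :: "'a set set" and B :: "'b set"
  assumes "ideal_on X I" "q_plus X I" "hereditarily_meager X I" "MA_countable B" "\<U> \<lesssim> B"
    and fin: "\<forall>i. finite (F i)" and disj: "\<forall>i j. i \<noteq> j \<longrightarrow> F i \<inter> F j = {}"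
    and AX: "(\<Union>i. F i) \<subseteq> X" and pos: "\<forall>U\<in>\<U>. (\<Union>i. F i) \<inter> U \<in> Iplus X I"
  shows "\<exists>S \<subseteq> (\<Union>i. F i). (\<forall>i. card (S \<inter> F i) \<le> 1) \<and> (\<forall>U\<in>\<U>. S \<inter> U \<in> Iplus X I)"
proof -
  have "\<forall>U\<in>\<U>. \<exists>Y\<subseteq>(\<Union>i. F i) \<inter> U. Y \<in> Iplus X I \<and> (\<forall>i. card (Y \<inter> F i) \<le> 1)"
  proof
    fix U assume "U \<in> \<U>"
    then have "(\<Union>i. F i) \<inter> U \<in> Iplus X I" using pos by blast
    then show "\<exists>Y\<subseteq>(\<Union>i. F i) \<inter> U. Y \<in> Iplus X I \<and> (\<forall>i. card (Y \<inter> F i) \<le> 1)"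
      by (rule q_plus_selector[OF assms(1,2) _ fin disj]) blast
  qed
  from bchoice[OF this] obtain Y
    where Y: "\<forall>U\<in>\<U>. Y U \<subseteq> (\<Union>i. F i) \<inter> U \<and> Y U \<in> Iplus X I \<and> (\<forall>i. card (Y U \<inter> F i) \<le> 1)"
    by blast
  have "\<forall>U\<in>\<U>. \<exists>N. (\<forall>k::nat. nowhere_dense_in (cantor_space (Y U)) (N k)) \<and>
           (\<forall>Z\<subseteq>Y U. (\<forall>k. char_pt (Y U) Z \<notin> N k) \<longrightarrow> Z \<notin> I)"
  proof
    fix U assume "U \<in> \<U>"
    then have "Y U \<in> Iplus X I" using Y by blast
    then show "\<exists>N. (\<forall>k::nat. nowhere_dense_in (cantor_space (Y U)) (N k)) \<and>
           (\<forall>Z\<subseteq>Y U. (\<forall>k. char_pt (Y U) Z \<notin> N k) \<longrightarrow> Z \<notin> I)"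
      by (rule hereditarily_meager_cover[OF assms(1,3)])
  qed
  from bchoice[OF this] obtain N
    where N: "\<forall>U\<in>\<U>. (\<forall>k::nat. nowhere_dense_in (cantor_space (Y U)) (N U k)) \<and>
           (\<forall>Z\<subseteq>Y U. (\<forall>k. char_pt (Y U) Z \<notin> N U k) \<longrightarrow> Z \<notin> I)"
    by blast
  have "\<forall>U\<in>\<U>. Y U \<subseteq> (\<Union>i. F i) \<and> (\<forall>i. card (Y U \<inter> F i) \<le> 1)" using Y by blast
  moreover have "\<forall>U\<in>\<U>. \<forall>k. nowhere_dense_in (cantor_space (Y U)) (N U k)" using N by blast
  ultimately have "\<exists>S \<subseteq> (\<Union>i. F i). (\<forall>i. card (S \<inter> F i) \<le> 1) \<and>
      (\<forall>U\<in>\<U>. \<forall>k. char_pt (Y U) (S \<inter> Y U) \<notin> N U k)"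
    by (rule selector_avoiding_nowhere_dense[OF assms(4,5) fin disj])
  then obtain S where S: "S \<subseteq> (\<Union>i. F i)" "\<forall>i. card (S \<inter> F i) \<le> 1"
    "\<forall>U\<in>\<U>. \<forall>k. char_pt (Y U) (S \<inter> Y U) \<notin> N U k"
    by blast
  have "S \<inter> U \<in> Iplus X I" if U: "U \<in> \<U>" for U
  proof (rule Iplus_mono[OF assms(1)])
    have "S \<inter> Y U \<subseteq> Y U" "\<forall>k. char_pt (Y U) (S \<inter> Y U) \<notin> N U k" using S(3) U by auto
    then have "S \<inter> Y U \<notin> I" using N U by blast
    then show "S \<inter> Y U \<in> Iplus X I" using S(1) AX unfolding Iplus_def by blast
    show "S \<inter> Y U \<subseteq> S \<inter> U" "S \<inter> U \<subseteq> X" using Y U S(1) AX by blast+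
  qed
  then show ?thesis using S(1,2) by blast
qed

lemma base_of_nhds:
  assumes "base_of \<tau> B" "openin \<tau> U" "x \<in> U"
  shows "\<exists>V\<in>B. x \<in> V \<and> V \<subseteq> U"
proof -
  obtain \<C> where "\<C> \<subseteq> B" "\<Union>\<C> = U" using assms(1,2) unfolding base_of_def by blast
  then show ?thesis using assms(3) by blast
qed

lemma I_tau_crowded_from_base:
  assumes "base_of \<tau> B" "ideal_on X I" "S \<subseteq> X"
    and pos: "\<forall>V\<in>B. S \<inter> V \<noteq> {} \<longrightarrow> S \<inter> V \<in> Iplus X I"
  shows "I_tau_crowded X I \<tau> S"
  unfolding I_tau_crowded_def
proof (intro allI impI)
  fix U assume "openin \<tau> U"
  show "S \<inter> U = {} \<or> S \<inter> U \<in> Iplus X I"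
  proof (cases "S \<inter> U = {}")
    case False
    then obtain x where "x \<in> S" "x \<in> U" by blast
    then obtain V where V: "V \<in> B" "x \<in> V" "V \<subseteq> U"
      using base_of_nhds[OF assms(1) \<open>openin \<tau> U\<close>] by blast
    then have "S \<inter> V \<in> Iplus X I" using pos \<open>x \<in> S\<close> by blast
    moreover have "S \<inter> V \<subseteq> S \<inter> U" "S \<inter> U \<subseteq> X" using V(3) \<open>S \<subseteq> X\<close> by auto
    ultimately show ?thesis using Iplus_mono[OF assms(2)] by blast
  qed simp
qed

lemma closure_of_eq_from_base:
  assumes "base_of \<tau> B" "S \<subseteq> A" "A \<subseteq> topspace \<tau>"
    and meets: "\<forall>V\<in>B. A \<inter> V \<noteq> {} \<longrightarrow> S \<inter> V \<noteq> {}"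
  shows "\<tau> closure_of S = \<tau> closure_of A"
proof
  show "\<tau> closure_of S \<subseteq> \<tau> closure_of A" using \<open>S \<subseteq> A\<close> by (rule closure_of_mono)
  have "A \<subseteq> \<tau> closure_of S"
  proof
    fix x assume "x \<in> A"
    show "x \<in> \<tau> closure_of S"
      unfolding in_closure_of
    proof (intro conjI allI impI)
      show "x \<in> topspace \<tau>" using \<open>x \<in> A\<close> \<open>A \<subseteq> topspace \<tau>\<close> by blast
      fix T assume "x \<in> T \<and> openin \<tau> T"
      then obtain V where "V \<in> B" "x \<in> V" "V \<subseteq> T" using base_of_nhds[OF assms(1)] by blast
      then show "\<exists>y. y \<in> S \<and> y \<in> T" using meets \<open>x \<in> A\<close> by blast
    qed
  qed
  then show "\<tau> closure_of A \<subseteq> \<tau> closure_of S"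
    by (metis closure_of_closure_of closure_of_mono)
qed

theorem mainTheorem8:
  fixes X :: "'a set" and I :: "'a set set" and \<tau> :: "'a topology"
    and F :: "nat \<Rightarrow> 'a set"
  assumes "countable X" and "infinite X"
    and "ideal_on X I" and "q_plus X I" and "hereditarily_meager X I"
    and "topspace \<tau> = X" and "I_crowded_topology I \<tau>"
    and "weight_below_mc \<tau>"
    and "\<forall>i. finite (F i) \<and> F i \<subseteq> X"
    and "\<forall>i j. i \<noteq> j \<longrightarrow> F i \<inter> F j = {}"
    and "I_tau_crowded X I \<tau> (\<Union>i. F i)"
  shows "\<exists>S \<subseteq> (\<Union>i. F i). I_tau_crowded X I \<tau> S \<and> (\<forall>i. card (S \<inter> F i) \<le> 1)
           \<and> \<tau> closure_of S = \<tau> closure_of (\<Union>i. F i)"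
proof -
  obtain B where B: "base_of \<tau> B" "MA_countable B"
    using assms(8) lepoll_refl unfolding weight_below_mc_def by blast
  define \<U> where "\<U> = {U \<in> B. (\<Union>i. F i) \<inter> U \<noteq> {}}"
  have fin: "\<forall>i. finite (F i)" and AX: "(\<Union>i. F i) \<subseteq> X" using assms(9) by auto
  have "\<U> \<lesssim> B" unfolding \<U>_def by (rule subset_imp_lepoll) blast
  moreover have "\<forall>U\<in>\<U>. (\<Union>i. F i) \<inter> U \<in> Iplus X I"
    using assms(11) B(1) unfolding \<U>_def I_tau_crowded_def base_of_def by auto
  ultimately have "\<exists>S \<subseteq> (\<Union>i. F i). (\<forall>i. card (S \<inter> F i) \<le> 1) \<and> (\<forall>U\<in>\<U>. S \<inter> U \<in> Iplus X I)"
    by (rule selector_positive_on_family[OF assms(3-5) B(2) _ fin assms(10) AX])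
  then obtain S where S: "S \<subseteq> (\<Union>i. F i)" "\<forall>i. card (S \<inter> F i) \<le> 1"
    "\<forall>U\<in>\<U>. S \<inter> U \<in> Iplus X I"
    by blast
  have "\<forall>V\<in>B. S \<inter> V \<noteq> {} \<longrightarrow> S \<inter> V \<in> Iplus X I" using S(1,3) unfolding \<U>_def by auto
  then have "I_tau_crowded X I \<tau> S"
    using I_tau_crowded_from_base[OF B(1) assms(3)] S(1) AX by blast
  moreover have "\<forall>V\<in>B. (\<Union>i. F i) \<inter> V \<noteq> {} \<longrightarrow> S \<inter> V \<noteq> {}"
    using S(3) Iplus_infinite[OF assms(3)] unfolding \<U>_def by fastforce
  then have "\<tau> closure_of S = \<tau> closure_of (\<Union>i. F i)"
    using closure_of_eq_from_base[OF B(1) S(1)] AX assms(6) by blast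
  ultimately show ?thesis using S(1,2) by blast
qed

end
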